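(* Let $X_1, X_2,\ldots$ be an exchangeable sequence of Bernoulli random variables, fix $k\in\mathbb N$, $e_1,\ldots,e_k\in\{0,1\}$, $\alpha=\sum_{j=1}^k e_j$, and $N\in{}^*\mathbb N\setminus\mathbb N$, and let $Y_N=\frac{X_1+\cdots+X_N}{N}$. If $\mathbb P(X_1=e_1,\ldots,X_k=e_k)=0$, then $$\sum_{i = 0}^N {}^*\mathbb{P}\left(X_1 = e_1, \ldots, X_k = e_k \,\Big\vert\, Y_N = \tfrac{i}{N}\right) {}^*\mathbb{P}\left(Y_N = \tfrac{i}{N}\right) \approx \sum_{i = 0}^N \left(\tfrac{i}{N} \right)^{\alpha} \left(1 - \tfrac{i}{N} \right)^{k - \alpha} {}^*\mathbb{P}\left(Y_N = \tfrac{i}{N}\right),$$ where a term whose conditioning event has probability zero is taken to be $0$.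
   Context: Bernoulli means $\{0,1\}$-valued; exchangeable means every finite subcollection has the same joint law as any permutation of it. Work in a sufficiently saturated nonstandard extension; ${}^*\mathbb P$ extends $\mathbb P$, $X_1,\ldots,X_N$ are the first $N$ terms of the extended sequence. $x\approx y$ means $x-y$ is infinitesimal. *)

theory Defs
  imports "HOL-Probability.Probability"
begin

definition exchangeable :: "'a measure \<Rightarrow> (nat \<Rightarrow> 'a \<Rightarrow> real) \<Rightarrow> bool" where
  "exchangeable M X \<longleftrightarrow>
     (\<forall>S p. finite S \<and> S \<subseteq> {1..} \<and> p permutes S \<longrightarrow>
        distr M (PiM S (\<lambda>_. borel)) (\<lambda>\<omega>. restrict (\<lambda>i. X i \<omega>) S) =
        distr M (PiM S (\<lambda>_. borel)) (\<lambda>\<omega>. restrict (\<lambda>i. X (p i) \<omega>) S))"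

definition cond_prob :: "'a measure \<Rightarrow> 'a set \<Rightarrow> 'a set \<Rightarrow> real" where
  "cond_prob M A B = (if measure M B = 0 then 0 else measure M (A \<inter> B) / measure M B)"

definition avgY :: "(nat \<Rightarrow> 'a \<Rightarrow> real) \<Rightarrow> nat \<Rightarrow> 'a \<Rightarrow> real" where
  "avgY X N \<omega> = (\<Sum>j=1..N. X j \<omega>) / real N"

end

theory Submission
  imports Defs
begin

text \<open>Since the event A = {X_1 = e_1, ..., X_k = e_k} is null, every summand on the left vanishes,
  so it suffices that the right-hand side tends to 0. If n of X_1, ..., X_N equal 1, then
  (n/N)^alpha (1 - n/N)^(k - alpha) is the proportion of index tuples j in {1..N}^k with
  X_{j_1} = e_1, ..., X_{j_k} = e_k. Taking expectations, the right-hand side is the average over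
  all N^k tuples j of P(X_{j_1} = e_1, ..., X_{j_k} = e_k). By exchangeability this probability
  equals P(A) = 0 whenever j is injective, and the non-injective tuples form the vanishing
  fraction 1 - prod_{m<k} (1 - m/N) of all tuples.\<close>

lemma permutes_extending_inj_on:
  assumes "finite S" and "A \<subseteq> S" and "j ` A \<subseteq> S" and "inj_on j A"
  obtains p where "p permutes S" and "\<And>x. x \<in> A \<Longrightarrow> p x = j x"
proof -
  have "finite A" using assms(1,2) by (rule finite_subset[rotated])
  then have "card (S - A) = card (S - j ` A)"
    using assms by (simp add: card_Diff_subset card_image)
  then obtain g where g: "bij_betw g (S - A) (S - j ` A)"
    using assms(1) finite_same_card_bij by (meson finite_Diff)
  define p where "p x = (if x \<in> A then j x else if x \<in> S then g x else x)" for x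
  have "bij_betw p A (j ` A)"
    using inj_on_imp_bij_betw[OF assms(4)] by (rule bij_betw_cong[THEN iffD2, rotated]) (simp add: p_def)
  moreover have "bij_betw p (S - A) (S - j ` A)"
    using g by (rule bij_betw_cong[THEN iffD2, rotated]) (simp add: p_def)
  ultimately have "bij_betw p (A \<union> (S - A)) (j ` A \<union> (S - j ` A))"
    by (rule bij_betw_combine) blast
  moreover have "A \<union> (S - A) = S" and "j ` A \<union> (S - j ` A) = S"
    using assms(2,3) by blast+
  ultimately have "bij_betw p S S" by simp
  then have "p permutes S"
    by (rule bij_imp_permutes) (use assms(2) in \<open>auto simp: p_def\<close>)
  then show thesis using that by (simp add: p_def)
qed

lemma sum_binary_eq_card:
  fixes x :: "'a \<Rightarrow> 'b::semiring_1"
  assumes "finite U" and "\<And>t. t \<in> U \<Longrightarrow> x t \<in> {0, 1}"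
  shows "(\<Sum>t\<in>U. x t) = of_nat (card {t\<in>U. x t = 1})"
proof -
  have "(\<Sum>t\<in>U. x t) = (\<Sum>t\<in>U. if x t = 1 then 1 else 0)"
    by (rule sum.cong) (use assms(2) in auto)
  then show ?thesis using assms(1) by (simp add: sum.If_cases Int_def)
qed

lemma prod_binary_pattern:
  fixes a b :: "'b::comm_monoid_mult"
  assumes "finite I" and "\<And>m. m \<in> I \<Longrightarrow> e m \<in> {0, 1::nat}"
  shows "(\<Prod>m\<in>I. if e m = 1 then a else b) = a ^ (\<Sum>m\<in>I. e m) * b ^ (card I - (\<Sum>m\<in>I. e m))"
proof -
  have "I \<inter> - {m. e m = 1} = I - {m\<in>I. e m = 1}" by blast
  then have "card (I \<inter> - {m. e m = 1}) = card I - card {m\<in>I. e m = 1}"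
    using assms(1) by (simp add: card_Diff_subset)
  then show ?thesis
    using assms by (simp add: prod.If_cases sum_binary_eq_card Int_def)
qed

lemma card_PiE_pattern:
  fixes x :: "'a \<Rightarrow> real" and e :: "'i \<Rightarrow> nat"
  assumes "finite I" and "finite U"
    and x01: "\<And>t. t \<in> U \<Longrightarrow> x t \<in> {0, 1}" and e01: "\<And>m. m \<in> I \<Longrightarrow> e m \<in> {0, 1}"
  defines "n \<equiv> card {t\<in>U. x t = 1}"
  shows "card {j \<in> PiE I (\<lambda>_. U). \<forall>m\<in>I. x (j m) = real (e m)}
       = n ^ (\<Sum>m\<in>I. e m) * (card U - n) ^ (card I - (\<Sum>m\<in>I. e m))"
proof -
  have "{j \<in> PiE I (\<lambda>_. U). \<forall>m\<in>I. x (j m) = real (e m)}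
      = PiE I (\<lambda>m. {t\<in>U. x t = real (e m)})"
    by (auto simp: PiE_iff extensional_def)
  then have "card {j \<in> PiE I (\<lambda>_. U). \<forall>m\<in>I. x (j m) = real (e m)}
      = (\<Prod>m\<in>I. card {t\<in>U. x t = real (e m)})"
    using assms(1) by (simp add: card_PiE)
  also have "\<dots> = (\<Prod>m\<in>I. if e m = 1 then n else card U - n)"
  proof (rule prod.cong[OF refl])
    fix m assume "m \<in> I"
    have "{t\<in>U. x t = 0} = U - {t\<in>U. x t = 1}"
      using x01 by force
    then show "card {t\<in>U. x t = real (e m)} = (if e m = 1 then n else card U - n)"
      using e01[OF \<open>m \<in> I\<close>] assms(2) by (auto simp: n_def card_Diff_subset)
  qed
  also have "\<dots> = n ^ (\<Sum>m\<in>I. e m) * (card U - n) ^ (card I - (\<Sum>m\<in>I. e m))"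
    by (rule prod_binary_pattern[OF assms(1) e01])
  finally show ?thesis .
qed

lemma avgY_eq_card:
  assumes "\<And>t. t \<in> {1..N} \<Longrightarrow> X t \<omega> \<in> {0, 1}"
  shows "avgY X N \<omega> = real (card {t\<in>{1..N}. X t \<omega> = 1}) / real N"
  using sum_binary_eq_card[of "{1..N}" "\<lambda>t. X t \<omega>"] assms by (simp add: avgY_def)

lemma avgY_pattern_weight:
  fixes e :: "nat \<Rightarrow> nat"
  assumes "N \<ge> 1" and X01: "\<And>t. t \<in> {1..N} \<Longrightarrow> X t \<omega> \<in> {0, 1}"
    and e01: "\<And>m. m \<in> {1..k} \<Longrightarrow> e m \<in> {0, 1}"
  shows "avgY X N \<omega> ^ (\<Sum>m=1..k. e m) * (1 - avgY X N \<omega>) ^ (k - (\<Sum>m=1..k. e m))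
       = real (card {j \<in> PiE {1..k} (\<lambda>_. {1..N}). \<forall>m\<in>{1..k}. X (j m) \<omega> = real (e m)}) / real N ^ k"
proof -
  define n where "n = card {t\<in>{1..N}. X t \<omega> = 1}"
  define \<alpha> where "\<alpha> = (\<Sum>m=1..k. e m)"
  have "n \<le> card {1..N}" unfolding n_def by (rule card_mono) auto
  then have "n \<le> N" by simp
  have "\<alpha> \<le> k"
    using sum_mono[of "{1..k}" e "\<lambda>_. 1"] e01 unfolding \<alpha>_def by force
  have "avgY X N \<omega> = real n / real N" and "1 - avgY X N \<omega> = real (N - n) / real N"
    using avgY_eq_card[of N X \<omega>] X01 \<open>n \<le> N\<close> assms(1) by (simp_all add: n_def field_simps)
  then have "avgY X N \<omega> ^ \<alpha> * (1 - avgY X N \<omega>) ^ (k - \<alpha>)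
      = real (n ^ \<alpha> * (N - n) ^ (k - \<alpha>)) / real N ^ (\<alpha> + (k - \<alpha>))"
    by (simp add: power_divide power_add)
  also have "\<alpha> + (k - \<alpha>) = k" using \<open>\<alpha> \<le> k\<close> by simp
  also have "n ^ \<alpha> * (N - n) ^ (k - \<alpha>)
      = card {j \<in> PiE {1..k} (\<lambda>_. {1..N}). \<forall>m\<in>{1..k}. X (j m) \<omega> = real (e m)}"
    using card_PiE_pattern[of "{1..k}" "{1..N}" "\<lambda>t. X t \<omega>" e] X01 e01 by (simp add: n_def \<alpha>_def)
  finally show ?thesis by (simp add: \<alpha>_def)
qed

lemma tendsto_card_non_inj_PiE_ratio:
  assumes "finite A"
  shows "(\<lambda>N. real (card {j \<in> PiE A (\<lambda>_. {1..N}). \<not> inj_on j A}) / real N ^ card A) \<longlonglongrightarrow> 0"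
proof -
  let ?k = "card A"
  have "(\<lambda>N. 1 - (\<Prod>m<?k. 1 - real m / real N)) \<longlonglongrightarrow> 1 - (\<Prod>m<?k. 1 - 0)"
    by (intro tendsto_intros)
  moreover have ratio: "1 - (\<Prod>m<?k. 1 - real m / real N)
      = real (card {j \<in> PiE A (\<lambda>_. {1..N}). \<not> inj_on j A}) / real N ^ ?k" if "N \<ge> ?k" "N \<ge> 1" for N
  proof -
    let ?J = "PiE A (\<lambda>_. {1..N})"
    have "card {j \<in> ?J. inj_on j A} = (\<Prod>m\<in>{0..<?k}. N - m)"
      using card_inj_on_subset_funcset[OF assms, of "{1..N}" A] by simp
    moreover have "card {j \<in> ?J. \<not> inj_on j A} = card ?J - card {j \<in> ?J. inj_on j A}"
      using assms by (subst card_Diff_subset[symmetric]) (auto intro: arg_cong[where f=card] simp: finite_PiE)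
    moreover have "card {j \<in> ?J. inj_on j A} \<le> card ?J"
      using assms by (intro card_mono) (auto simp: finite_PiE)
    moreover have "(\<Prod>m<?k. 1 - real m / real N) = (\<Prod>m<?k. real (N - m) / real N)"
      by (intro prod.cong refl) (use that in \<open>auto simp: field_simps\<close>)
    moreover have "(\<Prod>m<?k. real (N - m) / real N) = real (\<Prod>m\<in>{0..<?k}. N - m) / real N ^ ?k"
      by (simp add: prod_dividef atLeast0LessThan)
    ultimately show ?thesis
      using assms that by (simp add: card_PiE diff_divide_distrib)
  qed
  moreover have "\<forall>\<^sub>F N in sequentially. 1 - (\<Prod>m<?k. 1 - real m / real N)
      = real (card {j \<in> PiE A (\<lambda>_. {1..N}). \<not> inj_on j A}) / real N ^ ?k"
    using eventually_ge_at_top[of "max ?k 1"] by eventually_elim (rule ratio; simp)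
  ultimately show ?thesis
    by (simp add: Lim_transform_eventually)
qed

context prob_space
begin

lemma cond_prob_null_event:
  assumes "A \<in> events" and "prob A = 0"
  shows "cond_prob M A B = 0"
proof -
  have "prob (A \<inter> B) \<le> prob A"
    using assms(1) by (intro finite_measure_mono) auto
  then show ?thesis
    using assms(2) measure_nonneg[of M "A \<inter> B"] by (simp add: cond_prob_def)
qed

lemma events_pattern:
  assumes "finite I" and "\<And>m. m \<in> I \<Longrightarrow> Y m \<in> borel_measurable M"
  shows "{\<omega> \<in> space M. \<forall>m\<in>I. Y m \<omega> = (c m :: real)} \<in> events"
  using assms by measurable

lemma events_avgY_eq:
  assumes "\<And>t. t \<in> {1..N} \<Longrightarrow> X t \<in> borel_measurable M"
  shows "{\<omega> \<in> space M. avgY X N \<omega> = c} \<in> events"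
  using assms unfolding avgY_def by measurable

lemma expectation_card_occurring:
  assumes "finite J" and "\<And>j. j \<in> J \<Longrightarrow> E j \<in> events"
  shows "expectation (\<lambda>\<omega>. real (card {j\<in>J. \<omega> \<in> E j})) = (\<Sum>j\<in>J. prob (E j))"
proof -
  have "real (card {j\<in>J. \<omega> \<in> E j}) = (\<Sum>j\<in>J. indicator (E j) \<omega>)" for \<omega>
    using assms(1) by (simp add: indicator_def sum.If_cases Int_def)
  then show ?thesis
    using assms by (simp add: Bochner_Integration.integral_sum emeasure_eq_measure)
qed

lemma exchangeable_prob_reindex:
  assumes exch: "exchangeable M X" and meas: "\<And>i. i \<ge> 1 \<Longrightarrow> X i \<in> borel_measurable M"
    and "finite I" and "I \<subseteq> {1..}" and "inj_on j I" and "j ` I \<subseteq> {1..}"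
  shows "prob {\<omega> \<in> space M. \<forall>m\<in>I. X (j m) \<omega> = c m}
       = prob {\<omega> \<in> space M. \<forall>m\<in>I. X m \<omega> = c m}"
proof -
  define S where "S = I \<union> j ` I"
  have "finite S" and "S \<subseteq> {1..}" and "I \<subseteq> S"
    using assms(3,4,6) by (auto simp: S_def)
  obtain p where p: "p permutes S" and pj: "\<And>m. m \<in> I \<Longrightarrow> p m = j m"
    using permutes_extending_inj_on[OF \<open>finite S\<close> _ _ \<open>inj_on j I\<close>] by (auto simp: S_def)
  define C where "C = PiE S (\<lambda>i. if i \<in> I then {c i} else UNIV)"
  define V where "V q \<omega> = restrict (\<lambda>i. X (q i) \<omega>) S" for q \<omega>
  have C: "C \<in> sets (PiM S (\<lambda>_. borel))"
    unfolding C_def using \<open>finite S\<close> by (intro sets_PiM_I_finite) auto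
  have V: "V q \<in> measurable M (PiM S (\<lambda>_. borel))" if "q ` S \<subseteq> S" for q
    unfolding V_def using that \<open>S \<subseteq> {1..}\<close> by (intro measurable_restrict meas) auto
  have "restrict g S \<in> C \<longleftrightarrow> (\<forall>m\<in>I. g m = c m)" for g :: "nat \<Rightarrow> real"
    using \<open>I \<subseteq> S\<close> by (auto simp: C_def PiE_iff subset_iff)
  then have prob_V: "measure (distr M (PiM S (\<lambda>_. borel)) (V q)) C
      = prob {\<omega> \<in> space M. \<forall>m\<in>I. X (q m) \<omega> = c m}"
    if "q ` S \<subseteq> S" for q
    using measure_distr[OF V[OF that] C] by (simp add: V_def vimage_def Int_def conj_commute)
  have "distr M (PiM S (\<lambda>_. borel)) (V (\<lambda>i. i)) = distr M (PiM S (\<lambda>_. borel)) (V p)"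
    using exch \<open>finite S\<close> \<open>S \<subseteq> {1..}\<close> p unfolding exchangeable_def V_def by blast
  then have "prob {\<omega> \<in> space M. \<forall>m\<in>I. X m \<omega> = c m}
      = prob {\<omega> \<in> space M. \<forall>m\<in>I. X (p m) \<omega> = c m}"
    using prob_V[of "\<lambda>i. i"] prob_V[of p] permutes_image[OF p] by simp
  also have "\<dots> = prob {\<omega> \<in> space M. \<forall>m\<in>I. X (j m) \<omega> = c m}"
    using pj by (intro arg_cong[where f=prob]) auto
  finally show ?thesis ..
qed

lemma sum_level_probs_avgY:
  assumes "N \<ge> 1" and meas: "\<And>t. t \<in> {1..N} \<Longrightarrow> X t \<in> borel_measurable M"
    and X01: "\<And>t \<omega>. t \<in> {1..N} \<Longrightarrow> \<omega> \<in> space M \<Longrightarrow> X t \<omega> \<in> {0, 1}"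
  shows "(\<Sum>i=0..N. g (real i / real N) * prob {\<omega> \<in> space M. avgY X N \<omega> = real i / real N})
       = expectation (\<lambda>\<omega>. g (avgY X N \<omega>))"
proof -
  let ?B = "\<lambda>i. {\<omega> \<in> space M. avgY X N \<omega> = real i / real N}"
  have B: "?B i \<in> events" for i
    using events_avgY_eq[of N X] meas by simp
  have "g (avgY X N \<omega>) = (\<Sum>i=0..N. g (real i / real N) * indicator (?B i) \<omega>)" if "\<omega> \<in> space M" for \<omega>
  proof -
    define n where "n = card {t\<in>{1..N}. X t \<omega> = 1}"
    have "n \<le> card {1..N}" unfolding n_def by (rule card_mono) auto
    moreover have "avgY X N \<omega> = real n / real N"
      using avgY_eq_card[of N X \<omega>] X01 that by (simp add: n_def)
    ultimately show ?thesis
      using that \<open>N \<ge> 1\<close> by (simp add: indicator_def if_distrib)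
  qed
  then have "expectation (\<lambda>\<omega>. g (avgY X N \<omega>))
      = expectation (\<lambda>\<omega>. \<Sum>i=0..N. g (real i / real N) * indicator (?B i) \<omega>)"
    by (intro Bochner_Integration.integral_cong) auto
  also have "\<dots> = (\<Sum>i=0..N. g (real i / real N) * prob (?B i))"
    using B by (subst Bochner_Integration.integral_sum) (auto simp: emeasure_eq_measure Int_absorb2)
  finally show ?thesis ..
qed

lemma sum_level_weights_eq_mean_pattern_prob:
  fixes e :: "nat \<Rightarrow> nat"
  assumes "N \<ge> 1" and meas: "\<And>t. t \<in> {1..N} \<Longrightarrow> X t \<in> borel_measurable M"
    and X01: "\<And>t \<omega>. t \<in> {1..N} \<Longrightarrow> \<omega> \<in> space M \<Longrightarrow> X t \<omega> \<in> {0, 1}"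
    and e01: "\<And>m. m \<in> {1..k} \<Longrightarrow> e m \<in> {0, 1}"
  shows "(\<Sum>i=0..N. (real i / real N) ^ (\<Sum>m=1..k. e m) * (1 - real i / real N) ^ (k - (\<Sum>m=1..k. e m))
            * prob {\<omega> \<in> space M. avgY X N \<omega> = real i / real N})
       = (\<Sum>j\<in>PiE {1..k} (\<lambda>_. {1..N}).
            prob {\<omega> \<in> space M. \<forall>m\<in>{1..k}. X (j m) \<omega> = real (e m)}) / real N ^ k"
proof -
  define \<alpha> where "\<alpha> = (\<Sum>m=1..k. e m)"
  let ?J = "PiE {1..k} (\<lambda>_. {1..N})"
  let ?E = "\<lambda>j. {\<omega> \<in> space M. \<forall>m\<in>{1..k}. X (j m) \<omega> = real (e m)}"
  have "(\<Sum>i=0..N. (real i / real N) ^ \<alpha> * (1 - real i / real N) ^ (k - \<alpha>)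
            * prob {\<omega> \<in> space M. avgY X N \<omega> = real i / real N})
      = expectation (\<lambda>\<omega>. avgY X N \<omega> ^ \<alpha> * (1 - avgY X N \<omega>) ^ (k - \<alpha>))"
    using sum_level_probs_avgY[of N X "\<lambda>x. x ^ \<alpha> * (1 - x) ^ (k - \<alpha>)"] assms(1-3) by simp
  also have "\<dots> = expectation (\<lambda>\<omega>. real (card {j\<in>?J. \<omega> \<in> ?E j}) / real N ^ k)"
  proof (intro Bochner_Integration.integral_cong refl)
    fix \<omega> assume "\<omega> \<in> space M"
    then have "{j\<in>?J. \<omega> \<in> ?E j} = {j\<in>?J. \<forall>m\<in>{1..k}. X (j m) \<omega> = real (e m)}" by auto
    moreover have "avgY X N \<omega> ^ \<alpha> * (1 - avgY X N \<omega>) ^ (k - \<alpha>) = real (card \<dots>) / real N ^ k"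
      unfolding \<alpha>_def using assms(1) X01[OF _ \<open>\<omega> \<in> space M\<close>] e01 by (rule avgY_pattern_weight)
    ultimately show "avgY X N \<omega> ^ \<alpha> * (1 - avgY X N \<omega>) ^ (k - \<alpha>)
        = real (card {j\<in>?J. \<omega> \<in> ?E j}) / real N ^ k"
      by simp
  qed
  also have "\<dots> = (\<Sum>j\<in>?J. prob (?E j)) / real N ^ k"
  proof -
    have "?E j \<in> events" if "j \<in> ?J" for j
      using that by (intro events_pattern meas) auto
    then have "expectation (\<lambda>\<omega>. real (card {j\<in>?J. \<omega> \<in> ?E j})) = (\<Sum>j\<in>?J. prob (?E j))"
      by (intro expectation_card_occurring) (auto simp: finite_PiE)
    then show ?thesis by simp
  qed
  finally show ?thesis by (simp add: \<alpha>_def)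
qed

lemma sum_pattern_probs_le_card_non_inj:
  assumes exch: "exchangeable M X" and meas: "\<And>i. i \<ge> 1 \<Longrightarrow> X i \<in> borel_measurable M"
    and "finite I" and "I \<subseteq> {1..}" and "finite U" and "U \<subseteq> {1..}"
    and null: "prob {\<omega> \<in> space M. \<forall>m\<in>I. X m \<omega> = c m} = 0"
  shows "(\<Sum>j\<in>PiE I (\<lambda>_. U). prob {\<omega> \<in> space M. \<forall>m\<in>I. X (j m) \<omega> = c m})
       \<le> real (card {j \<in> PiE I (\<lambda>_. U). \<not> inj_on j I})"
proof -
  let ?J = "PiE I (\<lambda>_. U)"
  have "(\<Sum>j\<in>?J. prob {\<omega> \<in> space M. \<forall>m\<in>I. X (j m) \<omega> = c m})
      \<le> (\<Sum>j\<in>?J. if inj_on j I then 0 else 1)"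
  proof (rule sum_mono)
    fix j assume "j \<in> ?J"
    then have "j ` I \<subseteq> {1..}" using \<open>U \<subseteq> {1..}\<close> by (auto simp: PiE_iff)
    then show "prob {\<omega> \<in> space M. \<forall>m\<in>I. X (j m) \<omega> = c m} \<le> (if inj_on j I then 0 else 1)"
      using exchangeable_prob_reindex[OF exch meas \<open>finite I\<close> \<open>I \<subseteq> {1..}\<close>] null by auto
  qed
  also have "\<dots> = real (card {j \<in> ?J. \<not> inj_on j I})"
    using \<open>finite I\<close> \<open>finite U\<close> by (simp add: sum.If_cases finite_PiE Int_def)
  finally show ?thesis .
qed

lemma sum_level_weights_tendsto_0:
  fixes e :: "nat \<Rightarrow> nat"
  assumes meas: "\<And>i. i \<ge> 1 \<Longrightarrow> X i \<in> borel_measurable M"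
    and X01: "\<And>i \<omega>. i \<ge> 1 \<Longrightarrow> \<omega> \<in> space M \<Longrightarrow> X i \<omega> \<in> {0, 1}"
    and exch: "exchangeable M X" and e01: "\<And>m. m \<in> {1..k} \<Longrightarrow> e m \<in> {0, 1}"
    and null: "prob {\<omega> \<in> space M. \<forall>m\<in>{1..k}. X m \<omega> = real (e m)} = 0"
  shows "(\<lambda>N. \<Sum>i=0..N. (real i / real N) ^ (\<Sum>m=1..k. e m)
            * (1 - real i / real N) ^ (k - (\<Sum>m=1..k. e m))
            * prob {\<omega> \<in> space M. avgY X N \<omega> = real i / real N}) \<longlonglongrightarrow> 0"
    (is "?T \<longlonglongrightarrow> 0")
proof (rule tendsto_sandwich[OF _ _ tendsto_const])
  let ?R = "\<lambda>N. real (card {j \<in> PiE {1..k} (\<lambda>_. {1..N}). \<not> inj_on j {1..k}}) / real N ^ k"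
  show "?R \<longlonglongrightarrow> 0"
    using tendsto_card_non_inj_PiE_ratio[of "{1..k}"] by simp
  have bounds: "0 \<le> ?T N \<and> ?T N \<le> ?R N" if "N \<ge> 1" for N
  proof -
    let ?P = "\<lambda>j. prob {\<omega> \<in> space M. \<forall>m\<in>{1..k}. X (j m) \<omega> = real (e m)}"
    have "?T N = (\<Sum>j\<in>PiE {1..k} (\<lambda>_. {1..N}). ?P j) / real N ^ k"
      using that meas X01 e01 by (intro sum_level_weights_eq_mean_pattern_prob) auto
    moreover have "(\<Sum>j\<in>PiE {1..k} (\<lambda>_. {1..N}). ?P j)
        \<le> real (card {j \<in> PiE {1..k} (\<lambda>_. {1..N}). \<not> inj_on j {1..k}})"
      using exch meas null by (intro sum_pattern_probs_le_card_non_inj) auto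
    ultimately show ?thesis
      by (simp add: divide_right_mono sum_nonneg)
  qed
  have "\<forall>\<^sub>F N in sequentially. 0 \<le> ?T N \<and> ?T N \<le> ?R N"
    using eventually_ge_at_top[of 1] by eventually_elim (rule bounds)
  then show "\<forall>\<^sub>F N in sequentially. 0 \<le> ?T N" and "\<forall>\<^sub>F N in sequentially. ?T N \<le> ?R N"
    by (simp_all add: eventually_conj_iff)
qed

end

theorem mainTheorem6:
  fixes M :: "'a measure" and X :: "nat \<Rightarrow> 'a \<Rightarrow> real"
    and k :: nat and e :: "nat \<Rightarrow> nat"
  assumes "prob_space M"
    and "\<And>i. i \<ge> 1 \<Longrightarrow> X i \<in> borel_measurable M"
    and "\<And>i \<omega>. i \<ge> 1 \<Longrightarrow> \<omega> \<in> space M \<Longrightarrow> X i \<omega> \<in> {0, 1}"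
    and "exchangeable M X"
    and "\<And>j. j \<in> {1..k} \<Longrightarrow> e j \<in> {0, 1}"
    and "measure M {\<omega> \<in> space M. \<forall>j\<in>{1..k}. X j \<omega> = real (e j)} = 0"
  shows "(\<lambda>N. (\<Sum>i=0..N.
              cond_prob M {\<omega> \<in> space M. \<forall>j\<in>{1..k}. X j \<omega> = real (e j)}
                          {\<omega> \<in> space M. avgY X N \<omega> = real i / real N}
            * measure M {\<omega> \<in> space M. avgY X N \<omega> = real i / real N})
         - (\<Sum>i=0..N. (real i / real N) ^ (\<Sum>j=1..k. e j)
                      * (1 - real i / real N) ^ (k - (\<Sum>j=1..k. e j))
            * measure M {\<omega> \<in> space M. avgY X N \<omega> = real i / real N}))
         \<longlonglongrightarrow> 0"
proof -
  interpret prob_space M by fact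
  let ?A = "{\<omega> \<in> space M. \<forall>j\<in>{1..k}. X j \<omega> = real (e j)}"
  let ?B = "\<lambda>N i. {\<omega> \<in> space M. avgY X N \<omega> = real i / real N}"
  have "?A \<in> events"
    using assms(2) by (intro events_pattern) auto
  then have lhs: "(\<Sum>i=0..N. cond_prob M ?A (?B N i) * prob (?B N i)) = 0" for N
    using cond_prob_null_event assms(6) by simp
  have "(\<lambda>N. \<Sum>i=0..N. (real i / real N) ^ (\<Sum>j=1..k. e j)
      * (1 - real i / real N) ^ (k - (\<Sum>j=1..k. e j)) * prob (?B N i)) \<longlonglongrightarrow> 0"
    using assms(2-6) by (rule sum_level_weights_tendsto_0)
  then show ?thesis
    unfolding lhs using tendsto_minus by fastforce
qed

end
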